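(* Let $0<q<1$, let $k$ be a nonnegative integer, $n$ a positive integer, and $x\in[0,1]$. Then $$\left(\frac{n-k}{n}\right)B_{k,n}(x,q)+\left(\frac{k+1}{n}\right)B_{k+1,n}(x,q)=B_{k,n-1}(x,q)+(1-q)[x]_q[1-x]_q\,B_{k,n-1}(x,q).$$
   Context: Let $q$ be a real number with $0<q<1$. For real $x$, the $q$-number is $[x]_q=\frac{1-q^x}{1-q}$. For a nonnegative integer $k$ and $x\in[0,1]$, the modified $q$-Bernstein polynomials $B_{k,n}(x,q)$, $n=0,1,2,\dots$, are defined by the generating function $$\frac{t^k e^{[1-x]_q t}[x]_q^k}{k!}=\sum_{n=0}^\infty B_{k,n}(x,q)\frac{t^n}{n!}.$$ *)

theory Defs
  imports Complex_Main "HOL-Computational_Algebra.Formal_Power_Series"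
begin

definition qnum :: "real \<Rightarrow> real \<Rightarrow> real" where
  "qnum q x = (1 - q powr x) / (1 - q)"

definition qBern_gf :: "nat \<Rightarrow> real \<Rightarrow> real \<Rightarrow> real fps" where
  "qBern_gf k x q = fps_const (qnum q x ^ k / fact k) * fps_X ^ k * fps_exp (qnum q (1 - x))"

definition qBern :: "nat \<Rightarrow> nat \<Rightarrow> real \<Rightarrow> real \<Rightarrow> real" where
  "qBern k n x q = fact n * fps_nth (qBern_gf k x q) n"

end

theory Submission
  imports Defs
begin

text \<open>
  Reading off coefficients gives B(k,n) = (n choose k) [x]^k [1-x]^(n-k). By the absorption
  identities for binomial coefficients both terms on the left become
  (n-1 choose k) [x]^k [1-x]^(n-1-k), multiplied by [1-x] and [x] respectively; and since
  q^x q^(1-x) = q, the q-numbers satisfy [x] + [1-x] = 1 + (1-q) [x] [1-x].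
\<close>

lemma qBern_eq:
  "qBern k n x q = real (n choose k) * qnum q x ^ k * qnum q (1 - x) ^ (n - k)"
proof (cases "k \<le> n")
  case True
  have "qBern k n x q = fact n * (qnum q x ^ k / fact k * (qnum q (1 - x) ^ (n - k) / fact (n - k)))"
    unfolding qBern_def qBern_gf_def using True
    by (simp add: mult.assoc fps_X_power_mult_nth)
  also have "\<dots> = (fact n / (fact k * fact (n - k))) * qnum q x ^ k * qnum q (1 - x) ^ (n - k)"
    by (simp add: field_simps)
  finally show ?thesis
    using binomial_fact[OF True, where 'a=real] by simp
next
  case False
  then show ?thesis
    unfolding qBern_def qBern_gf_def by (simp add: mult.assoc fps_X_power_mult_nth)
qed

lemma qnum_add_qnum_one_minus:
  assumes "0 < q" "q \<noteq> 1"
  shows "qnum q x + qnum q (1 - x) = 1 + (1 - q) * qnum q x * qnum q (1 - x)"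
proof -
  define u v where "u = q powr x" and "v = q powr (1 - x)"
  have "q = u * v"
    using assms unfolding u_def v_def by (simp add: powr_add[symmetric])
  have "1 - q \<noteq> 0"
    using assms by simp
  then have "1 + (1 - q) * qnum q x * qnum q (1 - x) = 1 + (1 - u) * (1 - v) / (1 - q)"
    unfolding qnum_def u_def[symmetric] v_def[symmetric] by simp
  also have "\<dots> = (1 - q + (1 - u) * (1 - v)) / (1 - q)"
    using \<open>1 - q \<noteq> 0\<close> by (simp add: field_simps)
  also have "1 - q + (1 - u) * (1 - v) = (1 - u) + (1 - v)"
    using \<open>q = u * v\<close> by (simp add: algebra_simps)
  finally show ?thesis
    unfolding qnum_def u_def[symmetric] v_def[symmetric] by (metis add_divide_distrib)
qed

lemma binomial_absorb_comp_div:
  assumes "0 < n"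
  shows "(of_nat n - of_nat k) / of_nat n * of_nat (n choose k)
           = (of_nat (n - 1 choose k) :: 'a :: field_char_0)"
proof (cases "k \<le> n")
  case True
  have "of_nat (n - k) * of_nat (n choose k) = (of_nat n * of_nat (n - 1 choose k) :: 'a)"
    using binomial_absorb_comp[of n k] by (metis of_nat_mult)
  with True assms show ?thesis
    by (simp add: of_nat_diff field_simps)
qed (simp add: binomial_eq_0)

lemma binomial_absorption_div:
  assumes "0 < n"
  shows "(of_nat k + 1) / of_nat n * of_nat (n choose Suc k)
           = (of_nat (n - 1 choose k) :: 'a :: field_char_0)"
proof -
  have "of_nat (Suc k) * of_nat (n choose Suc k) = (of_nat n * of_nat (n - 1 choose k) :: 'a)"
    using binomial_absorption[of k n] by (metis of_nat_mult)
  with assms show ?thesis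
    by (simp add: field_simps)
qed

theorem theorem4:
  fixes q x :: real and k n :: nat
  assumes "0 < q" "q < 1" "0 < n" "0 \<le> x" "x \<le> 1"
  shows "((real n - real k) / real n) * qBern k n x q
           + ((real k + 1) / real n) * qBern (k + 1) n x q
         = qBern k (n - 1) x q + (1 - q) * qnum q x * qnum q (1 - x) * qBern k (n - 1) x q"
proof -
  define a b c where "a = qnum q x" and "b = qnum q (1 - x)" and "c = real (n - 1 choose k)"
  have lower: "qBern k (n - 1) x q = c * a ^ k * b ^ (n - 1 - k)"
    unfolding qBern_eq a_def b_def c_def ..
  have "((real n - real k) / real n) * qBern k n x q = c * a ^ k * b ^ (n - k)"
    using binomial_absorb_comp_div[OF \<open>0 < n\<close>, of k, where 'a=real]
    unfolding qBern_eq a_def b_def c_def by (metis mult.assoc)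
  moreover have "((real k + 1) / real n) * qBern (k + 1) n x q = c * a ^ (k + 1) * b ^ (n - (k + 1))"
    using binomial_absorption_div[OF \<open>0 < n\<close>, of k, where 'a=real]
    unfolding qBern_eq a_def b_def c_def Suc_eq_plus1 by (metis mult.assoc)
  ultimately have "((real n - real k) / real n) * qBern k n x q
          + ((real k + 1) / real n) * qBern (k + 1) n x q
        = c * a ^ k * b ^ (n - k) + c * a ^ (k + 1) * b ^ (n - (k + 1))"
    by simp
  also have "\<dots> = c * a ^ k * b ^ (n - 1 - k) * (a + b)"
  proof (cases "k < n")
    case True
    then have "n - k = Suc (n - 1 - k)" "n - (k + 1) = n - 1 - k" by simp_all
    then show ?thesis by (simp add: algebra_simps)
  next
    case False
    then have "c = 0"
      using \<open>0 < n\<close> unfolding c_def by (simp add: binomial_eq_0)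
    then show ?thesis by simp
  qed
  also have "a + b = 1 + (1 - q) * a * b"
    unfolding a_def b_def using assms by (simp add: qnum_add_qnum_one_minus)
  finally show ?thesis
    unfolding lower a_def b_def by (simp add: algebra_simps)
qed

end
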